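(* For every real number $C$ with $1 < C < \log_2 e$ there exists $\varepsilon=\varepsilon(C)>0$ such that for all integers $s \ge 2$ and $q$ with $1 \le \frac{q}{s} < C$, we have $R(s,q) \le (2-\varepsilon)^q$.
   Context: Let $Z_s$ be the ring of integers modulo $s$. A family $\mathcal{F} \subseteq Z_s^q$ is covering if for every ordered pair of distinct vectors $u,v \in \mathcal{F}$ and every $a \in Z_s$ there is a coordinate $i$ with $u_i - v_i = a$. $R(s,q)$ denotes the maximum possible cardinality of a covering family in $Z_s^q$. *)

theory Defs
  imports Complex_Main
begin

text \<open>Z_s^q: vectors u with coordinates u i in {0..<s} for i < q, and u i = 0 for i >= q
  (extensional representation, so distinct vectors are distinct functions).\<close>
definition Zvecs :: "nat \<Rightarrow> nat \<Rightarrow> (nat \<Rightarrow> nat) set" where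
  "Zvecs s q = {u. (\<forall>i<q. u i < s) \<and> (\<forall>i\<ge>q. u i = 0)}"

definition covering :: "nat \<Rightarrow> nat \<Rightarrow> (nat \<Rightarrow> nat) set \<Rightarrow> bool" where
  "covering s q F \<longleftrightarrow> F \<subseteq> Zvecs s q \<and>
     (\<forall>u\<in>F. \<forall>v\<in>F. u \<noteq> v \<longrightarrow>
        (\<forall>a<s. \<exists>i<q. (int (u i) - int (v i)) mod int s = int a))"

definition R :: "nat \<Rightarrow> nat \<Rightarrow> nat" where
  "R s q = Max {card F | F. covering s q F}"

end

theory Submission
  imports
    Defs
    "HOL-Computational_Algebra.Polynomial"
    "Jordan_Normal_Form.Determinant"
    "HOL-Analysis.Harmonic_Numbers"
begin

(*
  Let j = q - s + 1 and let \<omega> be a primitive s-th root of unity. To each u in a covering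
  family F attach the vectors a_u(S) = \<Prod>i\<in>S. \<omega>^(u i) and b_u(S) = \<Prod>i\<in>S. \<omega>^(-u i), indexed
  by the j-subsets S of the q coordinates. The pairing of a_u with b_v is the j-th elementary
  symmetric function of the numbers \<omega>^(u i - v i). For u = v it is (q choose j); for u \<noteq> v
  the covering property says these numbers include every s-th root of unity, whose elementary
  symmetric functions of degrees 1, ..., s - 1 vanish, while the remaining q - s numbers are too
  few to reach degree j; so the pairing is 0. Hence the a_u are linearly independent and
  |F| \<le> (q choose j). Finally q/s < log 2 e < 3/2 forces j \<le> (q + 2)/3, and binomial
  coefficients this far from the middle are exponentially smaller than 2^q.
*)

lemma card_le_card_if_biorthogonal:
  fixes a b :: "'x \<Rightarrow> 'y \<Rightarrow> 'a::idom"
  assumes X: "finite X" and Y: "finite Y" and "c \<noteq> 0"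
    and biorth: "\<And>u v. u \<in> X \<Longrightarrow> v \<in> X \<Longrightarrow> (\<Sum>y\<in>Y. a u y * b v y) = (if u = v then c else 0)"
  shows "card X \<le> card Y"
proof (rule ccontr)
  define n where "n = card X"
  define m where "m = card Y"
  assume "\<not> card X \<le> card Y"
  then have "m < n"
    by (simp add: n_def m_def)
  obtain f where f: "bij_betw f {0..<n} X"
    using ex_bij_betw_nat_finite[OF X] by (auto simp: n_def)
  obtain g where g: "bij_betw g {0..<m} Y"
    using ex_bij_betw_nat_finite[OF Y] by (auto simp: m_def)
  \<comment> \<open>Zero-padding to n \<times> n: then A * B = c I, but B has zero rows, so det B = 0.\<close>
  define A where "A = Matrix.mat n n (\<lambda>(k, l). if l < m then a (f k) (g l) else 0)"
  define B where "B = Matrix.mat n n (\<lambda>(l, k). if l < m then b (f k) (g l) else 0)"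
  have A: "A \<in> carrier_mat n n" and B: "B \<in> carrier_mat n n"
    by (simp_all add: A_def B_def)
  have "A * B = c \<cdot>\<^sub>m 1\<^sub>m n"
  proof (rule eq_matI)
    fix k k' assume "k < dim_row (c \<cdot>\<^sub>m 1\<^sub>m n)" "k' < dim_col (c \<cdot>\<^sub>m 1\<^sub>m n)"
    then have k: "k < n" "k' < n"
      by simp_all
    have "(A * B) $$ (k, k') = (\<Sum>l\<in>{0..<n}. if l < m then a (f k) (g l) * b (f k') (g l) else 0)"
      using k unfolding A_def B_def by (auto simp: scalar_prod_def intro: sum.cong)
    also have "\<dots> = (\<Sum>l\<in>{0..<m}. a (f k) (g l) * b (f k') (g l))"
      using \<open>m < n\<close> by (intro sum.mono_neutral_cong_right) auto
    also have "\<dots> = (\<Sum>y\<in>Y. a (f k) y * b (f k') y)"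
      by (rule sum.reindex_bij_betw[OF g])
    also have "\<dots> = (if f k = f k' then c else 0)"
      using biorth f k by (simp add: bij_betwE)
    also have "\<dots> = (if k = k' then c else 0)"
      using inj_on_eq_iff[OF bij_betw_imp_inj_on[OF f]] k by simp
    finally show "(A * B) $$ (k, k') = (c \<cdot>\<^sub>m 1\<^sub>m n) $$ (k, k')"
      using k by simp
  qed (simp_all add: A_def B_def)
  then have "c ^ n = det A * det B"
    using det_mult[OF A B] by simp
  moreover have "det B = 0"
    unfolding det_def'[OF B]
  proof (intro sum.neutral ballI)
    fix p assume "p \<in> {p. p permutes {0..<n}}"
    then have "p (n - 1) < n"
      using \<open>m < n\<close> permutes_in_image[of p "{0..<n}" "n - 1"] by simp
    then have "(\<Prod>i = 0..<n. B $$ (i, p i)) = 0"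
      using \<open>m < n\<close> by (intro prod_zero bexI[of _ "n - 1"]) (simp_all add: B_def)
    then show "signof p * (\<Prod>i = 0..<n. B $$ (i, p i)) = 0"
      by simp
  qed
  ultimately show False
    using \<open>c \<noteq> 0\<close> by simp
qed

lemma prod_monom_1:
  "finite A \<Longrightarrow> (\<Prod>i\<in>A. monom (c i) 1) = monom (\<Prod>i\<in>A. c i) (card A)"
  by (induction A rule: finite_induct) (simp_all add: mult_monom)

lemma coeff_prod_linear_factors:
  fixes z :: "'i \<Rightarrow> 'a::comm_ring_1"
  assumes "finite A"
  shows "coeff (\<Prod>i\<in>A. [:1, z i:]) k = (\<Sum>S | S \<subseteq> A \<and> card S = k. \<Prod>i\<in>S. z i)"
proof -
  have "(\<Prod>i\<in>A. [:1, z i:]) = (\<Prod>i\<in>A. monom (z i) 1 + 1)"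
    by (simp add: monom_altdef one_pCons)
  also have "\<dots> = (\<Sum>S\<in>Pow A. (\<Prod>i\<in>S. monom (z i) 1) * (\<Prod>i\<in>A - S. 1))"
    by (rule prod_add[OF assms])
  also have "\<dots> = (\<Sum>S\<in>Pow A. monom (\<Prod>i\<in>S. z i) (card S))"
  proof (intro sum.cong refl)
    fix S assume "S \<in> Pow A"
    then have "finite S"
      using assms finite_subset by blast
    from prod_monom_1[OF this, of z]
    show "(\<Prod>i\<in>S. monom (z i) 1) * (\<Prod>i\<in>A - S. 1) = monom (\<Prod>i\<in>S. z i) (card S)"
      by simp
  qed
  finally have "coeff (\<Prod>i\<in>A. [:1, z i:]) k = (\<Sum>S\<in>Pow A. if card S = k then \<Prod>i\<in>S. z i else 0)"
    by (simp add: coeff_sum coeff_monom)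
  also have "\<dots> = (\<Sum>S | S \<subseteq> A \<and> card S = k. \<Prod>i\<in>S. z i)"
    using assms by (simp add: sum.If_cases Int_def conj_commute)
  finally show ?thesis .
qed

lemma coeff_prod_roots_unity_eq_0:
  assumes "0 < k" "k < n"
  shows "coeff (\<Prod>w | w ^ n = 1. [:1, w:]) k = (0::complex)"
proof -
  let ?U = "{w::complex. w ^ n = 1}"
  let ?P = "\<Prod>w\<in>?U. [:1, w:]"
  have "\<not> ?U \<subseteq> {w. w ^ k = 1}"
  proof
    assume "?U \<subseteq> {w. w ^ k = 1}"
    then have "card ?U \<le> card {w::complex. w ^ k = 1}"
      using assms by (intro card_mono finite_roots_unity) auto
    also have "\<dots> \<le> k"
      using assms by (intro card_roots_unity) auto
    finally show False
      using assms card_roots_unity_eq[of n] by simp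
  qed
  then obtain \<zeta> :: complex where \<zeta>: "\<zeta> ^ n = 1" "\<zeta> ^ k \<noteq> 1"
    by blast
  have "\<zeta> \<noteq> 0"
    using \<zeta> assms by (auto simp: power_0_left)
  \<comment> \<open>Multiplication by \<zeta> permutes the n-th roots of unity, so P(\<zeta>x) = P(x).\<close>
  have "pcompose ?P [:0, \<zeta>:] = (\<Prod>w\<in>?U. [:1, \<zeta> * w:])"
    by (simp add: pcompose_prod pcompose_pCons mult.commute)
  also have "\<dots> = ?P"
    by (rule prod.reindex_bij_witness[where i = "\<lambda>w. w / \<zeta>" and j = "\<lambda>w. \<zeta> * w"])
      (use \<zeta> \<open>\<zeta> \<noteq> 0\<close> in \<open>auto simp: power_mult_distrib power_divide\<close>)
  finally have "\<zeta> ^ k * coeff ?P k = coeff ?P k"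
    by (metis coeff_pcompose_linear)
  with \<zeta> show ?thesis
    by (metis mult_cancel_right2)
qed

lemma coeff_prod_eq_0_if_roots_unity_subset:
  fixes z :: "'i \<Rightarrow> complex"
  assumes A: "finite A" and roots: "{w. w ^ n = 1} \<subseteq> z ` A"
    and k: "0 < k" "k < n" "card A < n + k"
  shows "coeff (\<Prod>i\<in>A. [:1, z i:]) k = 0"
proof -
  obtain T where T: "T \<subseteq> A" "inj_on z T" and zT: "z ` T = {w. w ^ n = 1}"
    using roots by (auto simp: subset_image_inj)
  have "card T = n"
    using card_image[OF T(2)] zT card_roots_unity_eq[of n] k by simp
  have PT: "(\<Prod>i\<in>T. [:1, z i:]) = (\<Prod>w | w ^ n = 1. [:1, w:])"
    using prod.reindex[OF T(2), of "\<lambda>w. [:1, w:]"] zT by simp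
  let ?Q = "\<Prod>i\<in>A - T. [:1, z i:]"
  have "degree ?Q \<le> (\<Sum>i\<in>A - T. degree [:1, z i:])"
    using degree_prod_sum_le[of "A - T" "\<lambda>i. [:1, z i:]"] A by (simp add: o_def)
  also have "\<dots> \<le> card (A - T)"
    using sum_mono[of "A - T" "\<lambda>i. degree [:1, z i:]" "\<lambda>_. 1"] by simp
  also have "\<dots> < k"
    using k A T(1) \<open>card T = n\<close> by (simp add: card_Diff_subset finite_subset)
  finally have deg: "degree ?Q < k" .
  have "(\<Prod>i\<in>A. [:1, z i:]) = (\<Prod>w | w ^ n = 1. [:1, w:]) * ?Q"
    unfolding prod.subset_diff[OF T(1) A] PT by (rule mult.commute)
  then have "coeff (\<Prod>i\<in>A. [:1, z i:]) k
      = (\<Sum>i\<le>k. coeff (\<Prod>w | w ^ n = 1. [:1, w:]) i * coeff ?Q (k - i))"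
    by (simp add: coeff_mult)
  also have "\<dots> = 0"
  proof (intro sum.neutral ballI)
    fix i assume "i \<in> {..k}"
    then show "coeff (\<Prod>w | w ^ n = 1. [:1, w:]) i * coeff ?Q (k - i) = 0"
      using deg k by (cases "i = 0") (auto simp: coeff_eq_0 coeff_prod_roots_unity_eq_0)
  qed
  finally show ?thesis .
qed

definition unity_root :: "nat \<Rightarrow> int \<Rightarrow> complex" where
  "unity_root n k = cis (2 * pi * of_int k / real n)"

lemma unity_root_add: "unity_root n (k + l) = unity_root n k * unity_root n l"
  by (simp add: unity_root_def cis_mult add_divide_distrib distrib_left)

lemma unity_root_0 [simp]: "unity_root n 0 = 1"
  by (simp add: unity_root_def)

lemma unity_root_mod:
  assumes "0 < n"
  shows "unity_root n (k mod int n) = unity_root n k"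
proof -
  have "2 * pi * of_int (int n * (k div int n)) / real n = 2 * pi * of_int (k div int n)"
    using assms by simp
  then have "unity_root n (int n * (k div int n)) = 1"
    by (simp add: unity_root_def)
  then show ?thesis
    using unity_root_add[of n "int n * (k div int n)" "k mod int n"] by simp
qed

lemma covering_differences_contain_roots_unity:
  assumes "covering s q F" "u \<in> F" "v \<in> F" "u \<noteq> v" "0 < s"
  shows "{w. w ^ s = 1} \<subseteq> (\<lambda>i. unity_root s (int (u i) - int (v i))) ` {..<q}"
proof
  fix w :: complex assume "w \<in> {w. w ^ s = 1}"
  then obtain a where "a < s" and w: "w = unity_root s (int a)"
    using Complex.bij_betw_roots_unity[OF \<open>0 < s\<close>] by (auto simp: bij_betw_def unity_root_def)
  then obtain i where "i < q" and "(int (u i) - int (v i)) mod int s = int a"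
    using assms unfolding covering_def by blast
  then show "w \<in> (\<lambda>i. unity_root s (int (u i) - int (v i))) ` {..<q}"
    using unity_root_mod[OF \<open>0 < s\<close>, of "int (u i) - int (v i)"] w by force
qed

lemma covering_card_le_binomial:
  assumes cov: "covering s q F" and "s \<le> q" "q + 2 \<le> 2 * s"
  shows "card F \<le> q choose (q - s + 1)"
proof (cases "finite F")
  case False
  then show ?thesis by simp
next
  case True
  define j where "j = q - s + 1"
  define Y where "Y = {S. S \<subseteq> {..<q} \<and> card S = j}"
  have "0 < s"
    using assms by simp
  have "finite Y"
    unfolding Y_def by (rule finite_subset[of _ "Pow {..<q}"]) auto
  have "card Y = q choose j"
    unfolding Y_def using n_subsets[of "{..<q}" j] by simp
  have "card F \<le> card Y"
  proof (rule card_le_card_if_biorthogonal[OF True \<open>finite Y\<close>, where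
        a = "\<lambda>u S. \<Prod>i\<in>S. unity_root s (int (u i))" and
        b = "\<lambda>v S. \<Prod>i\<in>S. unity_root s (- int (v i))"])
    show "of_nat (q choose j) \<noteq> (0::complex)"
      using assms by (simp add: j_def)
    fix u v assume "u \<in> F" "v \<in> F"
    define z where "z i = unity_root s (int (u i) - int (v i))" for i
    have pairing: "(\<Sum>S\<in>Y. (\<Prod>i\<in>S. unity_root s (int (u i))) * (\<Prod>i\<in>S. unity_root s (- int (v i))))
        = (\<Sum>S\<in>Y. \<Prod>i\<in>S. z i)"
      by (simp add: z_def prod.distrib[symmetric] unity_root_add[symmetric])
    show "(\<Sum>S\<in>Y. (\<Prod>i\<in>S. unity_root s (int (u i))) * (\<Prod>i\<in>S. unity_root s (- int (v i))))
        = (if u = v then of_nat (q choose j) else 0)"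
    proof (cases "u = v")
      case True
      then show ?thesis
        unfolding pairing using \<open>card Y = q choose j\<close> by (simp add: z_def)
    next
      case False
      have "(\<Sum>S\<in>Y. \<Prod>i\<in>S. z i) = coeff (\<Prod>i<q. [:1, z i:]) j"
        by (simp add: Y_def coeff_prod_linear_factors)
      also have "\<dots> = 0"
        using covering_differences_contain_roots_unity[OF cov \<open>u \<in> F\<close> \<open>v \<in> F\<close> False \<open>0 < s\<close>] assms
        by (intro coeff_prod_eq_0_if_roots_unity_subset) (auto simp: z_def j_def)
      finally show ?thesis
        unfolding pairing using False by simp
    qed
  qed
  with \<open>card Y = q choose j\<close> show ?thesis
    by (simp add: j_def)
qed

lemma R_le:
  assumes "\<And>F. covering s q F \<Longrightarrow> card F \<le> N"
  shows "R s q \<le> N"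
proof -
  have "finite {card F | F. covering s q F}"
    by (rule finite_subset[of _ "{..N}"]) (use assms in auto)
  moreover have "covering s q {}"
    by (simp add: covering_def)
  ultimately show ?thesis
    unfolding R_def using assms by (intro Max.boundedI) auto
qed

lemma binomial_le_pow2_pred:
  assumes "0 < n"
  shows "n choose k \<le> 2 ^ (n - 1)"
proof -
  obtain m where n: "n = Suc m"
    using assms by (cases n) auto
  show ?thesis
  proof (cases k)
    case 0
    then show ?thesis by simp
  next
    case (Suc k')
    have "(m choose k') + (m choose Suc k') \<le> 2 ^ m"
    proof (cases "Suc k' \<le> m")
      case True
      have "(m choose k') + (m choose Suc k') = (\<Sum>i\<in>{k', Suc k'}. m choose i)"
        by simp
      also have "\<dots> \<le> (\<Sum>i\<le>m. m choose i)"
        by (rule sum_mono2) (use True in auto)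
      finally show ?thesis
        by (simp add: choose_row_sum)
    next
      case False
      then show ?thesis
        using binomial_le_pow2[of m k'] by (simp add: binomial_eq_0)
    qed
    then show ?thesis
      by (simp add: n Suc)
  qed
qed

lemma binomial_mult_pow_le:
  fixes x :: real
  assumes "0 \<le> x"
  shows "real (n choose k) * x ^ k \<le> (1 + x) ^ n"
proof (cases "k \<le> n")
  case True
  have "real (n choose k) * x ^ k \<le> (\<Sum>i\<le>n. real (n choose i) * x ^ i)"
    by (rule member_le_sum) (use True assms in auto)
  also have "\<dots> = (x + 1) ^ n"
    by (simp add: binomial_ring)
  finally show ?thesis
    by (simp add: add.commute)
next
  case False
  then show ?thesis
    using assms by (simp add: binomial_eq_0)
qed

lemma half_pow2_le_pow:
  fixes \<epsilon> :: real
  assumes "0 \<le> \<epsilon>" "real n * \<epsilon> \<le> 1"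
  shows "2 ^ n / 2 \<le> (2 - \<epsilon>) ^ n"
proof (cases "n = 0")
  case True
  then show ?thesis by simp
next
  case False
  then have "\<epsilon> \<le> real n * \<epsilon>"
    using assms by (simp add: mult_le_cancel_right1)
  with assms have "\<epsilon> \<le> 1"
    by linarith
  have "2 ^ n / 2 \<le> 2 ^ n * (1 + real n * (- \<epsilon> / 2))"
    using assms by simp
  also have "\<dots> \<le> 2 ^ n * (1 + (- \<epsilon> / 2)) ^ n"
    by (intro mult_left_mono Bernoulli_inequality) (use \<open>\<epsilon> \<le> 1\<close> in auto)
  also have "\<dots> = (2 - \<epsilon>) ^ n"
    by (simp add: power_mult_distrib[symmetric] algebra_simps)
  finally show ?thesis .
qed

lemma three_halves_mult_2_powr_lt_2: "3/2 * 2 powr (2/5) < (2::real)"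
proof -
  define x :: real where "x = 2 powr (2/5)"
  have "x ^ 5 = 2 powr (real 5 * (2/5))"
    unfolding x_def by (rule powr_power) simp
  then have "x ^ 5 = 4"
    by simp
  have "x < 4/3"
  proof (rule ccontr)
    assume "\<not> x < 4/3"
    then have "(4/3) ^ 5 \<le> x ^ 5"
      by (intro power_mono) auto
    with \<open>x ^ 5 = 4\<close> show False
      by (simp add: eval_nat_numeral)
  qed
  then show ?thesis
    unfolding x_def by simp
qed

lemma binomial_le_pow_below_2:
  "\<exists>\<epsilon>>0. \<forall>n k. 0 < n \<longrightarrow> 3 * k \<le> n + 2 \<longrightarrow> real (n choose k) \<le> (2 - \<epsilon>) ^ n"
proof -
  define B :: real where "B = 3/2 * 2 powr (2/5)"
  define \<epsilon> where "\<epsilon> = min (1/10) (2 - B)"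
  have "B < 2"
    unfolding B_def by (rule three_halves_mult_2_powr_lt_2)
  then have "\<epsilon> > 0"
    by (simp add: \<epsilon>_def)
  have "\<epsilon> \<le> 1/10" "\<epsilon> \<le> 2 - B"
    unfolding \<epsilon>_def by (rule min.cobounded1, rule min.cobounded2)
  have bound: "real (n choose k) \<le> (2 - \<epsilon>) ^ n" if "0 < n" "3 * k \<le> n + 2" for n k
  proof (cases "n < 10")
    case True
    have "real (n choose k) \<le> 2 ^ (n - 1)"
      using binomial_le_pow2_pred[OF \<open>0 < n\<close>, of k] by (simp add: numeral_power_le_of_nat_cancel_iff)
    also have "\<dots> = 2 ^ n / 2"
      using \<open>0 < n\<close> by (simp add: power_diff)
    also have "\<dots> \<le> (2 - \<epsilon>) ^ n"
    proof (rule half_pow2_le_pow)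
      have "real n * \<epsilon> \<le> 10 * (1/10)"
        using True \<open>\<epsilon> > 0\<close> \<open>\<epsilon> \<le> 1/10\<close> by (intro mult_mono) auto
      then show "real n * \<epsilon> \<le> 1"
        by simp
    qed (use \<open>\<epsilon> > 0\<close> in simp)
    finally show ?thesis .
  next
    case False
    then have "real k \<le> real n * (2/5)"
      using that by linarith
    have "real (n choose k) \<le> (3/2) ^ n * 2 ^ k"
      using binomial_mult_pow_le[of "1/2" n k] by (simp add: field_simps)
    also have "(2::real) ^ k = 2 powr real k"
      by (simp add: powr_realpow)
    also have "\<dots> \<le> 2 powr (real n * (2/5))"
      using \<open>real k \<le> real n * (2/5)\<close> by (intro powr_mono) auto
    also have "(3/2) ^ n * 2 powr (real n * (2/5)) = B ^ n"
      unfolding B_def power_mult_distrib by (simp add: powr_power)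
    also have "\<dots> \<le> (2 - \<epsilon>) ^ n"
      using \<open>\<epsilon> \<le> 2 - B\<close> by (intro power_mono) (auto simp: B_def)
    finally show ?thesis by simp
  qed
  with \<open>\<epsilon> > 0\<close> show ?thesis
    by blast
qed

lemma log2_exp1_le_three_halves: "log 2 (exp 1) \<le> 3/2"
  using ln2_ge_two_thirds by (simp add: log_def field_simps)

theorem proposition4p3:
  fixes C :: real
  assumes "1 < C" and "C < log 2 (exp 1)"
  shows "\<exists>\<epsilon>>0. \<forall>s q :: nat. 2 \<le> s \<and> 1 \<le> real q / real s \<and> real q / real s < C
            \<longrightarrow> real (R s q) \<le> (2 - \<epsilon>) ^ q"
proof -
  obtain \<epsilon> :: real where "\<epsilon> > 0" and binomial_bound:
    "\<And>n k. 0 < n \<Longrightarrow> 3 * k \<le> n + 2 \<Longrightarrow> real (n choose k) \<le> (2 - \<epsilon>) ^ n"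
    using binomial_le_pow_below_2 by blast
  have "real (R s q) \<le> (2 - \<epsilon>) ^ q"
    if "2 \<le> s" "1 \<le> real q / real s" "real q / real s < C" for s q :: nat
  proof -
    have "s \<le> q"
      using that by (simp add: field_simps)
    have "real q / real s < 3/2"
      using that assms(2) log2_exp1_le_three_halves by linarith
    then have "2 * q < 3 * s"
      using that by (simp add: field_simps)
    then have "R s q \<le> q choose (q - s + 1)"
      using \<open>2 \<le> s\<close> \<open>s \<le> q\<close> by (intro R_le covering_card_le_binomial) auto
    then have "real (R s q) \<le> real (q choose (q - s + 1))"
      by simp
    also have "\<dots> \<le> (2 - \<epsilon>) ^ q"
      using \<open>2 * q < 3 * s\<close> \<open>2 \<le> s\<close> \<open>s \<le> q\<close> by (intro binomial_bound) auto
    finally show ?thesis .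
  qed
  with \<open>\<epsilon> > 0\<close> show ?thesis
    by blast
qed

end
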